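(* Let $K\ge2$, $0\le\beta_k\le1$ and $0<\varpi<2$. Let $X,Y$ be random variables on $K$-letter alphabets $\{x_1,\dots,x_K\}$, $\{y_1,\dots,y_K\}$ whose joint law is $p(y_j)p(x_i\mid y_j)$, where $p(y)$ ranges over all distributions on $\{y_1,\dots,y_K\}$ and the backward matrix is fixed as $p(x_i\mid y_i)=1-\beta_k$ and $p(x_i\mid y_j)=\beta_k/(K-1)$ for $i\ne j$. Then $$\max\big\{L(\varpi,X)-L(\varpi,X\mid Y)\big\}=e^{\varpi(K-1)/K}-\Big((1-\beta_k)e^{\varpi\beta_k}+\beta_k e^{\varpi\left(1-\frac{\beta_k}{K-1}\right)}\Big),$$ where the maximum is over the distributions $p(y)$ (equivalently over the induced input distributions $p(x_i)=\sum_j p(y_j)p(x_i\mid y_j)$), and it is attained when $X$ (equivalently $Y$) is uniform.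
   Context: For a discrete random variable $X$ with distribution $\{p(x_1),\dots,p(x_n)\}$ the message importance measure (MIM) is $L(\varpi,X)=\sum_i p(x_i)e^{\varpi(1-p(x_i))}$. For a pair $(X,Y)$ the conditional message importance measure (CMIM) is $L(\varpi,X\mid Y)=\sum_{j:\,p(y_j)>0} p(y_j)\sum_i p(x_i\mid y_j)e^{\varpi(1-p(x_i\mid y_j))}$. *)

theory Defs
  imports Complex_Main
begin

text \<open>Alphabets {x_1..x_K}, {y_1..y_K} are indexed by {..<K}.
  A distribution on a K-letter alphabet is a nonnegative function summing to 1.\<close>

definition is_dist :: "nat \<Rightarrow> (nat \<Rightarrow> real) \<Rightarrow> bool" where
  "is_dist K p \<longleftrightarrow> (\<forall>j<K. 0 \<le> p j) \<and> (\<Sum>j<K. p j) = 1"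

definition MIM :: "nat \<Rightarrow> real \<Rightarrow> (nat \<Rightarrow> real) \<Rightarrow> real" where
  "MIM K w p = (\<Sum>i<K. p i * exp (w * (1 - p i)))"

text \<open>Conditional MIM; c i j = p(x_i | y_j), q j = p(y_j).\<close>
definition CMIM :: "nat \<Rightarrow> real \<Rightarrow> (nat \<Rightarrow> real) \<Rightarrow> (nat \<Rightarrow> nat \<Rightarrow> real) \<Rightarrow> real" where
  "CMIM K w q c = (\<Sum>j\<in>{j. j < K \<and> 0 < q j}. q j * (\<Sum>i<K. c i j * exp (w * (1 - c i j))))"

definition bwd :: "nat \<Rightarrow> real \<Rightarrow> nat \<Rightarrow> nat \<Rightarrow> real" where
  "bwd K b i j = (if i = j then 1 - b else b / (real K - 1))"

definition induced :: "nat \<Rightarrow> (nat \<Rightarrow> real) \<Rightarrow> (nat \<Rightarrow> nat \<Rightarrow> real) \<Rightarrow> nat \<Rightarrow> real" where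
  "induced K q c i = (\<Sum>j<K. q j * c i j)"

end

theory Submission
  imports Defs "HOL-Analysis.Convex"
begin

text \<open>Every column of the backward matrix is the same multiset of entries, so the conditional
  measure is the same constant for every output distribution. The unconditional measure is a
  sum of values of \<open>t \<mapsto> t * exp (w * (1 - t))\<close>, which is concave on \<open>[0,1]\<close>
  because \<open>w \<le> 2\<close>, hence by Jensen it is maximal at the uniform distribution; and the uniform output
  distribution induces the uniform input distribution because the matrix is symmetric and
  stochastic.\<close>

lemma convex_on_minus_mul_exp:
  fixes w :: real
  assumes "0 \<le> w" "w \<le> 2"
  shows "convex_on {0..1} (\<lambda>t. - (t * exp (w * (1 - t))))"
proof (rule f''_ge0_imp_convex[where f'="\<lambda>t. (w * t - 1) * exp (w * (1 - t))"
                                     and f''="\<lambda>t. w * (2 - w * t) * exp (w * (1 - t))"])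
  fix x :: real
  show "((\<lambda>t. - (t * exp (w * (1 - t)))) has_real_derivative (w * x - 1) * exp (w * (1 - x))) (at x)"
    by (auto intro!: derivative_eq_intros simp: algebra_simps)
  show "((\<lambda>t. (w * t - 1) * exp (w * (1 - t))) has_real_derivative
          w * (2 - w * x) * exp (w * (1 - x))) (at x)"
    by (auto intro!: derivative_eq_intros simp: algebra_simps)
  assume "x \<in> {0..1}"
  then have "w * x \<le> 2"
    using assms by (metis atLeastAtMost_iff mult_left_le order_trans)
  then show "0 \<le> w * (2 - w * x) * exp (w * (1 - x))"
    using assms by simp
qed simp

lemma is_dist_le_one:
  assumes "is_dist K p" "i < K"
  shows "p i \<le> 1"
proof -
  have "p i \<le> (\<Sum>j<K. p j)"
    using assms by (intro member_le_sum) (auto simp: is_dist_def)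
  with assms(1) show ?thesis by (simp add: is_dist_def)
qed

lemma MIM_cong:
  assumes "\<And>i. i < K \<Longrightarrow> p i = p' i"
  shows "MIM K w p = MIM K w p'"
  using assms by (simp add: MIM_def)

lemma MIM_uniform:
  assumes "K \<ge> 1"
  shows "MIM K w (\<lambda>_. 1 / real K) = exp (w * (real K - 1) / real K)"
  using assms by (simp add: MIM_def field_simps)

lemma MIM_le_uniform:
  assumes "0 \<le> w" "w \<le> 2" "K \<ge> 1" "is_dist K p"
  shows "MIM K w p \<le> exp (w * (real K - 1) / real K)"
proof -
  let ?g = "\<lambda>t. - (t * exp (w * (1 - t)))"
  have p: "p i \<in> {0..1}" if "i < K" for i
    using assms(4) that is_dist_le_one by (auto simp: is_dist_def)
  have "?g (\<Sum>i<K. (1 / real K) *\<^sub>R p i) \<le> (\<Sum>i<K. (1 / real K) * ?g (p i))"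
    using assms(3) p
    by (intro convex_on_sum[OF _ _ convex_on_minus_mul_exp[OF assms(1,2)]])
       (auto simp: lessThan_empty_iff)
  moreover have "(\<Sum>i<K. (1 / real K) *\<^sub>R p i) = 1 / real K"
    using assms(4) by (simp add: is_dist_def sum_divide_distrib[symmetric])
  moreover have "(\<Sum>i<K. (1 / real K) * ?g (p i)) = - MIM K w p / real K"
    by (simp add: MIM_def sum_divide_distrib[symmetric] sum_negf)
  ultimately have "MIM K w p / real K \<le> exp (w * (1 - 1 / real K)) / real K"
    by simp
  then show ?thesis
    using assms(3) by (simp add: field_simps)
qed

lemma CMIM_const_columns:
  assumes "is_dist K q"
    and "\<And>j. j < K \<Longrightarrow> (\<Sum>i<K. c i j * exp (w * (1 - c i j))) = C"
  shows "CMIM K w q c = C"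
proof -
  have "CMIM K w q c = (\<Sum>j\<in>{j. j < K \<and> 0 < q j}. q j * C)"
    unfolding CMIM_def using assms(2) by (intro sum.cong) auto
  also have "\<dots> = (\<Sum>j<K. q j * C)"
    using assms(1) by (intro sum.mono_neutral_left) (auto simp: is_dist_def order_le_less)
  also have "\<dots> = C"
    using assms(1) by (simp add: is_dist_def sum_distrib_right[symmetric])
  finally show ?thesis .
qed

lemma is_dist_induced:
  assumes "is_dist K q"
    and "\<And>i j. i < K \<Longrightarrow> j < K \<Longrightarrow> 0 \<le> c i j"
    and "\<And>j. j < K \<Longrightarrow> (\<Sum>i<K. c i j) = 1"
  shows "is_dist K (induced K q c)"
proof -
  have "(\<Sum>i<K. induced K q c i) = (\<Sum>j<K. q j * (\<Sum>i<K. c i j))"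
    unfolding induced_def by (subst sum.swap) (simp add: sum_distrib_left)
  also have "\<dots> = 1"
    using assms(1,3) by (simp add: is_dist_def)
  finally show ?thesis
    using assms(1,2) by (auto simp: is_dist_def induced_def intro!: sum_nonneg)
qed

lemma induced_uniform:
  assumes "\<And>i. i < K \<Longrightarrow> (\<Sum>j<K. c i j) = 1" "i < K"
  shows "induced K (\<lambda>_. 1 / real K) c i = 1 / real K"
  using assms by (simp add: induced_def sum_divide_distrib[symmetric])

lemma sum_bwd_column:
  assumes "j < K"
  shows "(\<Sum>i<K. f (bwd K b i j)) = f (1 - b) + (real K - 1) * f (b / (real K - 1))"
proof -
  have "(\<Sum>i<K. f (bwd K b i j)) = f (bwd K b j j) + (\<Sum>i\<in>{..<K} - {j}. f (bwd K b i j))"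
    using assms by (simp add: sum.remove)
  also have "(\<Sum>i\<in>{..<K} - {j}. f (bwd K b i j)) = (\<Sum>i\<in>{..<K} - {j}. f (b / (real K - 1)))"
    by (intro sum.cong) (auto simp: bwd_def)
  finally show ?thesis
    using assms by (simp add: bwd_def card_Diff_singleton of_nat_diff)
qed

lemma bwd_column_sum:
  assumes "K \<ge> 2" "j < K"
  shows "(\<Sum>i<K. bwd K b i j) = 1"
  using assms sum_bwd_column[of j K id b] by simp

lemma bwd_row_sum:
  assumes "K \<ge> 2" "i < K"
  shows "(\<Sum>j<K. bwd K b i j) = 1"
proof -
  have "(\<Sum>j<K. bwd K b i j) = (\<Sum>j<K. bwd K b j i)"
    by (simp add: bwd_def eq_commute)
  with bwd_column_sum[OF assms] show ?thesis
    by simp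
qed

lemma bwd_column_MIM:
  assumes "K \<ge> 2" "j < K"
  shows "(\<Sum>i<K. bwd K b i j * exp (w * (1 - bwd K b i j)))
       = (1 - b) * exp (w * b) + b * exp (w * (1 - b / (real K - 1)))"
  using assms sum_bwd_column[of j K "\<lambda>t. t * exp (w * (1 - t))" b] by simp

theorem proposition3:
  fixes K :: nat and b w :: real
  assumes "K \<ge> 2" and "0 \<le> b" and "b \<le> 1" and "0 < w" and "w < 2"
  defines "gain \<equiv> (\<lambda>q. MIM K w (induced K q (bwd K b)) - CMIM K w q (bwd K b))"
      and "val \<equiv> exp (w * (real K - 1) / real K)
                 - ((1 - b) * exp (w * b) + b * exp (w * (1 - b / (real K - 1))))"
  shows "(\<forall>q. is_dist K q \<longrightarrow> gain q \<le> val)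
       \<and> is_dist K (\<lambda>j. 1 / real K) \<and> gain (\<lambda>j. 1 / real K) = val"
proof -
  have bwd_nonneg: "0 \<le> bwd K b i j" for i j
    using assms(1-3) by (simp add: bwd_def)
  have CMIM: "CMIM K w q (bwd K b) = (1 - b) * exp (w * b) + b * exp (w * (1 - b / (real K - 1)))"
    if "is_dist K q" for q
    using that assms(1) by (intro CMIM_const_columns bwd_column_MIM)
  have upper: "gain q \<le> val" if "is_dist K q" for q
    using MIM_le_uniform[OF _ _ _ is_dist_induced[OF that bwd_nonneg bwd_column_sum[OF assms(1)]]]
          CMIM[OF that] assms(1,4,5)
    by (simp add: gain_def val_def)
  have uniform: "is_dist K (\<lambda>j. 1 / real K)"
    using assms(1) by (simp add: is_dist_def)
  have "MIM K w (induced K (\<lambda>_. 1 / real K) (bwd K b)) = MIM K w (\<lambda>_. 1 / real K)"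
    using assms(1) by (intro MIM_cong induced_uniform bwd_row_sum)
  then have "gain (\<lambda>_. 1 / real K) = val"
    using MIM_uniform CMIM[OF uniform] assms(1) by (simp add: gain_def val_def)
  with upper uniform show ?thesis
    by blast
qed

end
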